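(* Let $N\ge 2$, $R>0$, $p>0$ and consider $$\Delta u=v^p,\qquad \Delta v=e^{|\nabla u|}\qquad\text{in } B_R.$$ Then every positive radial solution $(u,v)$ of this system is either bounded (both $u$ and $v$ bounded in $B_R$) or satisfies: $u$ is bounded in $B_R$ and $\lim_{|x|\nearrow R}v(x)=\infty$.
   Context: $B_R\subset\mathbb{R}^N$ is the open ball of radius $R$ centred at the origin. A positive radial solution is a pair of radially symmetric functions $u,v\in C^2(B_R)$, positive in $B_R$, satisfying the equations pointwise. *)

theory Defs
  imports "HOL-Analysis.Analysis"
begin

definition partial :: "'n::finite \<Rightarrow> (real^'n \<Rightarrow> real) \<Rightarrow> real^'n \<Rightarrow> real" where
  "partial i f x = deriv (\<lambda>t. f (x + t *\<^sub>R axis i 1)) 0"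

definition grad :: "(real^'n::finite \<Rightarrow> real) \<Rightarrow> real^'n \<Rightarrow> real^'n" where
  "grad f x = (\<chi> i. partial i f x)"

definition laplacian :: "(real^'n::finite \<Rightarrow> real) \<Rightarrow> real^'n \<Rightarrow> real" where
  "laplacian f x = (\<Sum>i\<in>UNIV. partial i (partial i f) x)"

definition C2_on :: "(real^'n::finite) set \<Rightarrow> (real^'n \<Rightarrow> real) \<Rightarrow> bool" where
  "C2_on S f \<longleftrightarrow> (\<exists>Df D2f.
     (\<forall>x\<in>S. (f has_derivative (\<lambda>h. Df x \<bullet> h)) (at x)) \<and>
     (\<forall>x\<in>S. (Df has_derivative (\<lambda>h. D2f x *v h)) (at x)) \<and>
     continuous_on S (D2f :: real^'n \<Rightarrow> real^'n^'n))"

definition radial_on :: "(real^'n::finite) set \<Rightarrow> (real^'n \<Rightarrow> real) \<Rightarrow> bool" where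
  "radial_on S f \<longleftrightarrow> (\<forall>x\<in>S. \<forall>y\<in>S. norm x = norm y \<longrightarrow> f x = f y)"

end

theory Submission
  imports Defs
begin

text \<open>For radial solutions, with \<open>r = |x|\<close> and \<open>N = k + 1\<close>, the system reads
  \<open>U'' + k U'/r = V\<^sup>p\<close>, \<open>V'' + k V'/r = exp |U'|\<close>. Since \<open>(r\<^sup>k F')' = r\<^sup>k (F'' + k F'/r)\<close>,
  both \<open>U'\<close> and \<open>V'\<close> are positive and \<open>V\<close>, \<open>U'\<close> are increasing; the same identity gives
  \<open>V'' \<ge> exp U'(t\<^sub>0) / N\<close> beyond \<open>t\<^sub>0\<close>, so \<open>V\<close> grows at least quadratically from \<open>t\<^sub>0\<close> and
  \<open>U'(t\<^sub>0 + T) \<ge> U'(t\<^sub>0) + c exp (p U'(t\<^sub>0)) T\<^bsup>2p+1\<^esup>\<close>. Thus \<open>U'\<close> gains 1 within time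
  \<open>L exp (-q U')\<close>, \<open>q = p/(2p+1)\<close>; these steps shrink geometrically, which forces
  \<open>R - r \<le> C exp (-q U'(r))\<close>. Hence \<open>U' = O(log (1/(R - r)))\<close>, in particular \<open>U' \<le> K / sqrt (R - r)\<close>, is integrable and \<open>U\<close> is
  bounded, while the increasing \<open>V\<close> is either bounded or tends to infinity at \<open>R\<close>.\<close>

section \<open>Radial functions\<close>

lemma has_vector_derivative_along_line:
  fixes f :: "'a::real_normed_vector \<Rightarrow> 'b::real_normed_vector"
  assumes "(f has_derivative f') (at (x + t *\<^sub>R e))"
  shows "((\<lambda>s. f (x + s *\<^sub>R e)) has_vector_derivative f' e) (at t)"
proof -
  have "((\<lambda>s. x + s *\<^sub>R e) has_vector_derivative e) (at t)"
    by (auto intro!: derivative_eq_intros)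
  from vector_derivative_diff_chain_within[OF this has_derivative_at_withinI[OF assms]]
  show ?thesis by (simp add: o_def)
qed

lemma has_real_derivative_along_line:
  fixes f :: "'a::real_inner \<Rightarrow> real"
  assumes "(f has_derivative (\<lambda>h. D \<bullet> h)) (at (x + t *\<^sub>R e))"
  shows "((\<lambda>s. f (x + s *\<^sub>R e)) has_real_derivative D \<bullet> e) (at t)"
  using has_vector_derivative_along_line[OF assms]
  by (simp add: has_real_derivative_iff_has_vector_derivative)

lemma has_real_derivative_component_along_line:
  fixes g :: "'a::real_normed_vector \<Rightarrow> real^'n"
  assumes "(g has_derivative L) (at (x + t *\<^sub>R e))"
  shows "((\<lambda>s. g (x + s *\<^sub>R e) $ j) has_real_derivative L e $ j) (at t)"
  using bounded_linear.has_vector_derivative[OF bounded_linear_vec_nth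
      has_vector_derivative_along_line[OF assms]]
  by (simp add: has_real_derivative_iff_has_vector_derivative)

lemma partial_eq_component:
  fixes f :: "real^'n::finite \<Rightarrow> real"
  assumes "(f has_derivative (\<lambda>h. D \<bullet> h)) (at x)"
  shows "partial i f x = D $ i"
  using has_real_derivative_along_line[of f D x 0 "axis i 1"] assms
  by (simp add: partial_def DERIV_imp_deriv cart_eq_inner_axis)

lemma partial_partial_eq_hessian:
  fixes f :: "real^'n::finite \<Rightarrow> real"
  assumes S: "open S" "x \<in> S"
    and Df: "\<And>y. y \<in> S \<Longrightarrow> (f has_derivative (\<lambda>h. Df y \<bullet> h)) (at y)"
    and D2f: "(Df has_derivative (\<lambda>h. H *v h)) (at x)"
  shows "partial j (partial j f) x = (H *v axis j 1) $ j"
proof -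
  let ?line = "\<lambda>s. x + s *\<^sub>R axis j 1"
  have "((\<lambda>s. Df (?line s) $ j) has_real_derivative (H *v axis j 1) $ j) (at 0)"
    using has_real_derivative_component_along_line[of Df _ x 0] D2f by simp
  moreover have "open {s. ?line s \<in> S}"
    using S by (simp add: open_vimage[of S, unfolded vimage_def] continuous_intros)
  ultimately have "((\<lambda>s. partial j f (?line s)) has_real_derivative (H *v axis j 1) $ j) (at 0)"
    by (rule has_field_derivative_transform_within_open)
      (use S(2) partial_eq_component[OF Df] in auto)
  then show ?thesis
    by (simp add: partial_def[of j "partial j f"] DERIV_imp_deriv)
qed

lemma grad_eq:
  fixes f :: "real^'n::finite \<Rightarrow> real"
  assumes "(f has_derivative (\<lambda>h. D \<bullet> h)) (at x)"
  shows "grad f x = D"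
  using partial_eq_component[OF assms] by (simp add: grad_def vec_eq_iff)

lemma laplacian_eq_hessian_trace:
  fixes f :: "real^'n::finite \<Rightarrow> real"
  assumes "open S" "x \<in> S"
    and "\<And>y. y \<in> S \<Longrightarrow> (f has_derivative (\<lambda>h. Df y \<bullet> h)) (at y)"
    and "(Df has_derivative (\<lambda>h. H *v h)) (at x)"
  shows "laplacian f x = (\<Sum>j\<in>UNIV. (H *v axis j 1) $ j)"
  using partial_partial_eq_hessian[OF assms] by (simp add: laplacian_def)

text \<open>The coordinate \<open>i\<close> is arbitrary: it only selects the ray along which the profile of
  a radial function is read off.\<close>

locale radial_C2 =
  fixes f :: "real^'n::finite \<Rightarrow> real" and R :: real
    and Df :: "real^'n \<Rightarrow> real^'n" and D2f :: "real^'n \<Rightarrow> real^'n^'n" and i :: 'n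
  assumes Df: "\<And>x. x \<in> ball 0 R \<Longrightarrow> (f has_derivative (\<lambda>h. Df x \<bullet> h)) (at x)"
    and D2f: "\<And>x. x \<in> ball 0 R \<Longrightarrow> (Df has_derivative (\<lambda>h. D2f x *v h)) (at x)"
    and radial: "radial_on (ball 0 R) f"
begin

definition profile :: "real \<Rightarrow> real" where
  "profile t = f (t *\<^sub>R axis i 1)"

definition profile' :: "real \<Rightarrow> real" where
  "profile' t = Df (t *\<^sub>R axis i 1) $ i"

definition profile'' :: "real \<Rightarrow> real" where
  "profile'' t = (D2f (t *\<^sub>R axis i 1) *v axis i 1) $ i"

lemma axis_in_ball: "\<bar>t\<bar> < R \<Longrightarrow> t *\<^sub>R axis i (1::real) \<in> ball 0 R"
  by simp

lemma eq_profile: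
  assumes "x \<in> ball 0 R"
  shows "f x = profile (norm x)"
proof -
  have "norm x *\<^sub>R axis i (1::real) \<in> ball 0 R" "norm (norm x *\<^sub>R axis i (1::real)) = norm x"
    using assms by simp_all
  with assms radial show ?thesis
    unfolding radial_on_def profile_def by metis
qed

lemma has_real_derivative_profile: "\<bar>t\<bar> < R \<Longrightarrow> (profile has_real_derivative profile' t) (at t)"
  using has_real_derivative_along_line[of f _ 0 t "axis i 1"] Df[OF axis_in_ball]
  by (simp add: profile_def[abs_def] profile'_def cart_eq_inner_axis)

lemma has_real_derivative_profile': "\<bar>t\<bar> < R \<Longrightarrow> (profile' has_real_derivative profile'' t) (at t)"
  using has_real_derivative_component_along_line[of Df _ 0 t "axis i 1" i] D2f[OF axis_in_ball]
  by (simp add: profile'_def[abs_def] profile''_def)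

lemma Df_radial:
  assumes y: "y \<in> ball 0 R" "y \<noteq> 0"
  shows "Df y = profile' (norm y) *\<^sub>R sgn y"
proof -
  have "\<bar>norm y\<bar> < R" using y by simp
  then have "((profile \<circ> norm) has_derivative (\<lambda>h. (profile' (norm y) *\<^sub>R sgn y) \<bullet> h)) (at y)"
    using diff_chain_at[OF has_derivative_norm[OF y(2)]
        has_real_derivative_profile[unfolded has_field_derivative_def]]
    by (simp add: o_def inner_commute)
  then have "(f has_derivative (\<lambda>h. (profile' (norm y) *\<^sub>R sgn y) \<bullet> h)) (at y)"
    by (rule has_derivative_transform_within_open[OF _ open_ball y(1)])
      (simp add: eq_profile)
  then have "(\<lambda>h. Df y \<bullet> h) = (\<lambda>h. (profile' (norm y) *\<^sub>R sgn y) \<bullet> h)"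
    by (rule has_derivative_unique[OF Df[OF y(1)]])
  then show ?thesis
    by (simp only: fun_eq_iff vector_eq_rdot)
qed

lemma Df_radial_component:
  "y \<in> ball 0 R \<Longrightarrow> y \<noteq> 0 \<Longrightarrow> Df y $ j = profile' (norm y) * y $ j / norm y"
  by (simp add: Df_radial sgn_div_norm field_simps)

lemma norm_grad_on_axis:
  assumes "0 < t" "t < R"
  shows "norm (grad f (t *\<^sub>R axis i 1)) = \<bar>profile' t\<bar>"
  using assms grad_eq[OF Df] Df_radial[of "t *\<^sub>R axis i 1"] by (simp add: sgn_div_norm)

lemma hessian_diag_off_axis:
  assumes t: "0 < t" "t < R" and j: "j \<noteq> i"
  shows "(D2f (t *\<^sub>R axis i 1) *v axis j 1) $ j = profile' t / t"
proof -
  \<comment> \<open>On the line \<open>y(s)\<close>, \<open>Df (y s) $ j = profile' |y s| * s / |y s|\<close>, so the difference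
    quotient of \<open>Df _ $ j\<close> at \<open>s = 0\<close> tends to \<open>profile' t / t\<close>.\<close>
  let ?y = "\<lambda>s. t *\<^sub>R axis i 1 + s *\<^sub>R axis j (1::real)"
  let ?g = "\<lambda>s. Df (?y s) $ j"
  have y_j: "?y s $ j = s" for s
    using j by (simp add: axis_def)
  have y_nonzero: "?y s \<noteq> 0" for s
  proof -
    have "?y s $ i \<noteq> 0" using j t by (simp add: axis_def)
    then show ?thesis by (rule contrapos_nn) (simp only: zero_index)
  qed
  have "(?g has_real_derivative (D2f (t *\<^sub>R axis i 1) *v axis j 1) $ j) (at 0)"
    using has_real_derivative_component_along_line[of Df _ "t *\<^sub>R axis i 1" 0] D2f t by simp
  moreover have "?g 0 = 0"
    using Df_radial_component[of "?y 0" j] y_j[of 0] t by simp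
  ultimately have lim_hessian: "((\<lambda>s. ?g s / s) \<longlongrightarrow> (D2f (t *\<^sub>R axis i 1) *v axis j 1) $ j) (at 0)"
    by (simp add: has_field_derivative_iff)
  have profile'_cont: "isCont profile' t"
    using DERIV_isCont[OF has_real_derivative_profile'] t by simp
  have "((\<lambda>s. norm (?y s)) \<longlongrightarrow> norm (?y 0)) (at 0)"
    by (intro tendsto_intros)
  then have norm_lim: "((\<lambda>s. norm (?y s)) \<longlongrightarrow> t) (at 0)"
    using t by simp
  have "((\<lambda>s. profile' (norm (?y s)) / norm (?y s)) \<longlongrightarrow> profile' t / t) (at 0)"
    using tendsto_divide[OF isCont_tendsto_compose[OF profile'_cont norm_lim] norm_lim] t by simp
  moreover have "\<forall>\<^sub>F s in at 0. profile' (norm (?y s)) / norm (?y s) = ?g s / s"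
    unfolding eventually_at
  proof (intro exI[of _ "R - t"] conjI ballI impI)
    fix s :: real assume s: "s \<noteq> 0 \<and> dist s 0 < R - t"
    have "norm (?y s) \<le> t + \<bar>s\<bar>"
      using norm_triangle_ineq[of "t *\<^sub>R axis i (1::real)" "s *\<^sub>R axis j 1"] t by simp
    then have "?y s \<in> ball 0 R" using s by simp
    then show "profile' (norm (?y s)) / norm (?y s) = ?g s / s"
      using Df_radial_component[of "?y s" j, unfolded y_j] y_nonzero s by simp
  qed (use t in simp)
  ultimately have "((\<lambda>s. ?g s / s) \<longlongrightarrow> profile' t / t) (at 0)"
    by (rule Lim_transform_eventually)
  then show ?thesis
    using tendsto_unique[OF _ lim_hessian] by simp
qed

lemma laplacian_on_axis:
  assumes t: "0 < t" "t < R"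
  shows "laplacian f (t *\<^sub>R axis i 1) = profile'' t + (real CARD('n) - 1) * profile' t / t"
proof -
  let ?H = "D2f (t *\<^sub>R axis i 1)"
  have "laplacian f (t *\<^sub>R axis i 1) = (\<Sum>j\<in>UNIV. (?H *v axis j 1) $ j)"
    using laplacian_eq_hessian_trace[OF open_ball axis_in_ball Df D2f[OF axis_in_ball]] t
    by simp
  also have "\<dots> = (?H *v axis i 1) $ i + (\<Sum>j\<in>UNIV - {i}. (?H *v axis j 1) $ j)"
    by (simp add: sum.remove)
  also have "\<dots> = profile'' t + (\<Sum>j\<in>UNIV - {i}. profile' t / t)"
    using hessian_diag_off_axis[OF t] by (simp add: profile''_def)
  also have "\<dots> = profile'' t + (real CARD('n) - 1) * profile' t / t"
    by (simp add: card_Diff_singleton of_nat_diff)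
  finally show ?thesis .
qed

end

section \<open>The radial equation \<open>F' + k F / t = G\<close>\<close>

lemma continuous_on_of_real_derivative:
  fixes f :: "real \<Rightarrow> real"
  assumes "\<And>t. \<bar>t\<bar> < R \<Longrightarrow> (f has_real_derivative f' t) (at t)"
  shows "continuous_on {0..<R} f"
proof (rule continuous_at_imp_continuous_on, intro ballI)
  fix x assume "x \<in> {0..<R}"
  then show "isCont f x" using DERIV_isCont[OF assms[of x]] by simp
qed

lemma diff_le_diff_of_derivative_le:
  fixes f g :: "real \<Rightarrow> real"
  assumes "a \<le> b" "continuous_on {a..b} f" "continuous_on {a..b} g"
    and "\<And>x. a < x \<Longrightarrow> x < b \<Longrightarrow> (f has_real_derivative f' x) (at x)"
    and "\<And>x. a < x \<Longrightarrow> x < b \<Longrightarrow> (g has_real_derivative g' x) (at x)"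
    and "\<And>x. a < x \<Longrightarrow> x < b \<Longrightarrow> f' x \<le> g' x"
  shows "f b - f a \<le> g b - g a"
proof -
  have "g a - f a \<le> g b - f b"
    by (rule DERIV_nonneg_imp_increasing_open[of a b "\<lambda>x. g x - f x"])
      (use assms in \<open>auto intro!: exI DERIV_diff continuous_on_diff\<close>)
  then show ?thesis by simp
qed

lemma has_real_derivative_power_mult:
  fixes F :: "real \<Rightarrow> real"
  assumes "(F has_real_derivative F') (at s)" "s \<noteq> 0"
  shows "((\<lambda>s. s ^ k * F s) has_real_derivative s ^ k * (F' + real k * F s / s)) (at s)"
proof -
  have "real k * s ^ (k - 1) * F s + s ^ k * F' = s ^ k * (F' + real k * F s / s)"
    using assms(2) by (cases k) (simp_all add: field_simps)
  then show ?thesis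
    using DERIV_mult[OF DERIV_pow[of k s] assms(1)] by (simp add: mult.commute)
qed

lemma radial_ode_pos:
  fixes F F' G :: "real \<Rightarrow> real"
  assumes k: "k \<ge> 1" and F_cont: "continuous_on {0..<R} F"
    and F': "\<And>t. 0 < t \<Longrightarrow> t < R \<Longrightarrow> (F has_real_derivative F' t) (at t)"
    and eq: "\<And>t. 0 < t \<Longrightarrow> t < R \<Longrightarrow> F' t + real k * F t / t = G t"
    and G_pos: "\<And>t. 0 < t \<Longrightarrow> t < R \<Longrightarrow> G t > 0"
    and t: "0 < t" "t < R"
  shows "F t > 0"
proof -
  have "0 ^ k * F 0 < t ^ k * F t"
  proof (rule DERIV_pos_imp_increasing_open[OF t(1)])
    fix s assume s: "0 < s" "s < t"
    then show "\<exists>y. ((\<lambda>s. s ^ k * F s) has_real_derivative y) (at s) \<and> y > 0"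
      using has_real_derivative_power_mult[OF F', of s k] eq[of s] G_pos[of s] t by auto
  next
    show "continuous_on {0..t} (\<lambda>s. s ^ k * F s)"
      by (intro continuous_intros continuous_on_subset[OF F_cont]) (use t in auto)
  qed
  then show ?thesis
    using k t by (simp add: power_0_left zero_less_mult_iff)
qed

lemma radial_ode_bounds:
  fixes F F' G :: "real \<Rightarrow> real"
  assumes k: "k \<ge> 1" and F_cont: "continuous_on {0..<R} F"
    and F': "\<And>t. 0 < t \<Longrightarrow> t < R \<Longrightarrow> (F has_real_derivative F' t) (at t)"
    and eq: "\<And>t. 0 < t \<Longrightarrow> t < R \<Longrightarrow> F' t + real k * F t / t = G t"
    and G_mono: "\<And>s t. 0 < s \<Longrightarrow> s \<le> t \<Longrightarrow> t < R \<Longrightarrow> G s \<le> G t"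
    and t: "0 < t" "t < R"
  shows "F t \<le> t * G t / (real k + 1)" and "G t / (real k + 1) \<le> F' t"
proof -
  have "t ^ k * F t - 0 ^ k * F 0 \<le> G t / (real k + 1) * t ^ Suc k - G t / (real k + 1) * 0 ^ Suc k"
  proof (rule diff_le_diff_of_derivative_le)
    show "continuous_on {0..t} (\<lambda>s. s ^ k * F s)"
      by (intro continuous_intros continuous_on_subset[OF F_cont]) (use t in auto)
    fix s assume s: "0 < s" "s < t"
    show "((\<lambda>s. s ^ k * F s) has_real_derivative s ^ k * G s) (at s)"
      using has_real_derivative_power_mult[OF F', of s k] eq[of s] s t by simp
    show "((\<lambda>s. G t / (real k + 1) * s ^ Suc k) has_real_derivative s ^ k * G t) (at s)"
      by (rule DERIV_cong[OF DERIV_cmult[OF DERIV_pow[of "Suc k" s]]]) (simp add: field_simps)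
    show "s ^ k * G s \<le> s ^ k * G t"
      using G_mono[of s t] s t by (simp add: mult_left_mono)
  qed (use t in \<open>auto intro!: continuous_intros\<close>)
  then have "t ^ k * F t \<le> t ^ k * (t * G t / (real k + 1))"
    using k by (simp add: power_0_left mult_ac)
  then show upper: "F t \<le> t * G t / (real k + 1)"
    by (rule mult_left_le_imp_le) (use t in simp)
  have "real k * F t / t \<le> real k * G t / (real k + 1)"
    using mult_left_mono[OF upper, of "real k / t"] t by (simp add: field_simps)
  then have "G t - real k * G t / (real k + 1) \<le> F' t"
    using eq[OF t] by linarith
  moreover have "G t - real k * G t / (real k + 1) = G t / (real k + 1)"
    by (simp add: field_simps)
  ultimately show "G t / (real k + 1) \<le> F' t"
    by simp
qed

lemma le_sqrt_of_exp_le: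
  fixes q y B :: real
  assumes "q > 0" "y \<ge> 0" "exp (q * y) \<le> B"
  shows "y \<le> 2 / q * sqrt B"
proof -
  define z where "z = q * y / 2"
  have "z \<le> exp z" using exp_ge_add_one_self[of z] by linarith
  moreover have "z \<ge> 0" using assms(1,2) by (simp add: z_def)
  ultimately have "z\<^sup>2 \<le> (exp z)\<^sup>2" by (rule power_mono)
  also have "(exp z)\<^sup>2 = exp (q * y)"
    by (simp add: z_def power2_eq_square exp_add[symmetric])
  finally have "z \<le> sqrt B"
    using assms(3) by (intro real_le_rsqrt) simp
  then show ?thesis
    using assms(1) by (simp add: z_def field_simps)
qed

lemma geometric_partial_sum_le:
  fixes a \<rho> :: real
  assumes "a \<ge> 0" "0 < \<rho>" "\<rho> < 1"
  shows "a * (1 - \<rho> ^ m) / (1 - \<rho>) \<le> a / (1 - \<rho>)"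
proof -
  have "a * (1 - \<rho> ^ m) \<le> a * 1"
    using assms by (intro mult_left_mono) auto
  then show ?thesis
    using assms by (intro divide_right_mono) auto
qed

section \<open>Radial solutions of the system\<close>

locale radial_system =
  fixes U U' U'' V V' V'' :: "real \<Rightarrow> real" and R p :: real and k :: nat
  assumes p: "p > 0" and k: "k \<ge> 1"
    and U': "\<And>t. \<bar>t\<bar> < R \<Longrightarrow> (U has_real_derivative U' t) (at t)"
    and U'': "\<And>t. \<bar>t\<bar> < R \<Longrightarrow> (U' has_real_derivative U'' t) (at t)"
    and V': "\<And>t. \<bar>t\<bar> < R \<Longrightarrow> (V has_real_derivative V' t) (at t)"
    and V'': "\<And>t. \<bar>t\<bar> < R \<Longrightarrow> (V' has_real_derivative V'' t) (at t)"
    and V_pos: "\<And>t. 0 \<le> t \<Longrightarrow> t < R \<Longrightarrow> V t > 0"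
    and U_eq: "\<And>t. 0 < t \<Longrightarrow> t < R \<Longrightarrow> U'' t + real k * U' t / t = V t powr p"
    and V_eq: "\<And>t. 0 < t \<Longrightarrow> t < R \<Longrightarrow> V'' t + real k * V' t / t = exp \<bar>U' t\<bar>"
begin

lemma U_cont: "continuous_on {0..<R} U"
  using U' by (rule continuous_on_of_real_derivative)

lemma U'_cont: "continuous_on {0..<R} U'"
  using U'' by (rule continuous_on_of_real_derivative)

lemma V_cont: "continuous_on {0..<R} V"
  using V' by (rule continuous_on_of_real_derivative)

lemma V'_cont: "continuous_on {0..<R} V'"
  using V'' by (rule continuous_on_of_real_derivative)

lemma U'_pos:
  assumes "0 < t" "t < R"
  shows "U' t > 0"
proof (rule radial_ode_pos[OF k U'_cont _ U_eq _ assms])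
  fix s assume "0 < s" "s < R"
  then show "(U' has_real_derivative U'' s) (at s)" "V s powr p > 0"
    using U''[of s] V_pos[of s] by auto
qed

lemma V'_pos:
  assumes "0 < t" "t < R"
  shows "V' t > 0"
proof (rule radial_ode_pos[OF k V'_cont _ V_eq _ assms])
  fix s assume "0 < s" "s < R"
  then show "(V' has_real_derivative V'' s) (at s)" "exp \<bar>U' s\<bar> > 0"
    using V''[of s] by auto
qed

lemma V_mono:
  assumes "0 \<le> s" "s \<le> t" "t < R"
  shows "V s \<le> V t"
proof (rule DERIV_nonneg_imp_increasing_open[OF assms(2)])
  fix x assume "s < x" "x < t"
  with assms show "\<exists>y. (V has_real_derivative y) (at x) \<and> 0 \<le> y"
    using V'[of x] V'_pos[of x] by (intro exI[of _ "V' x"]) auto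
qed (use assms in \<open>auto intro: continuous_on_subset[OF V_cont]\<close>)

lemma V_powr_mono: "0 < s \<Longrightarrow> s \<le> t \<Longrightarrow> t < R \<Longrightarrow> V s powr p \<le> V t powr p"
  using V_mono[of s t] V_pos[of s] p by (intro powr_mono2) auto

lemma U''_lower: "0 < t \<Longrightarrow> t < R \<Longrightarrow> V t powr p / (real k + 1) \<le> U'' t"
  by (rule radial_ode_bounds(2)[OF k U'_cont _ U_eq V_powr_mono]) (use U'' in auto)

lemma U'_mono:
  assumes "0 < s" "s \<le> t" "t < R"
  shows "U' s \<le> U' t"
proof (rule DERIV_nonneg_imp_increasing_open[OF assms(2)])
  fix x assume "s < x" "x < t"
  with assms have x: "0 < x" "x < R" by auto
  have "0 \<le> V x powr p / (real k + 1)" by simp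
  also have "\<dots> \<le> U'' x" using U''_lower[of x] x by simp
  finally show "\<exists>y. (U' has_real_derivative y) (at x) \<and> 0 \<le> y"
    using U''[of x] x by (intro exI[of _ "U'' x"]) auto
qed (use assms in \<open>auto intro: continuous_on_subset[OF U'_cont]\<close>)

lemma V''_lower: "0 < t \<Longrightarrow> t < R \<Longrightarrow> exp (U' t) / (real k + 1) \<le> V'' t"
  using radial_ode_bounds(2)[OF k V'_cont _ V_eq, of t] V'' U'_mono U'_pos
  by (simp add: less_imp_le)

lemma V'_lower:
  assumes "0 < t0" "t0 \<le> t" "t < R"
  shows "exp (U' t0) / (real k + 1) * (t - t0) \<le> V' t"
proof -
  let ?c = "exp (U' t0) / (real k + 1)"
  have "?c * t - ?c * t0 \<le> V' t - V' t0"
  proof (rule diff_le_diff_of_derivative_le[where f' = "\<lambda>_. ?c"])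
    fix x assume x: "t0 < x" "x < t"
    then have "?c \<le> exp (U' x) / (real k + 1)"
      using U'_mono[of t0 x] assms by (simp add: divide_right_mono)
    also have "\<dots> \<le> V'' x"
      using V''_lower[of x] x assms by simp
    finally show "?c \<le> V'' x" .
  qed (use assms V'' in \<open>auto intro!: derivative_eq_intros continuous_intros
        continuous_on_subset[OF V'_cont]\<close>)
  then show ?thesis
    using V'_pos[of t0] assms unfolding right_diff_distrib by linarith
qed

lemma V_lower:
  assumes "0 < t0" "t0 \<le> t" "t < R"
  shows "exp (U' t0) / (real k + 1) * ((t - t0)\<^sup>2 / 2) \<le> V t"
proof -
  let ?c = "exp (U' t0) / (real k + 1)"
  have "?c * ((t - t0)\<^sup>2 / 2) - ?c * ((t0 - t0)\<^sup>2 / 2) \<le> V t - V t0"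
  proof (rule diff_le_diff_of_derivative_le[where f' = "\<lambda>x. ?c * (x - t0)"])
    fix x assume x: "t0 < x" "x < t"
    have "((\<lambda>x. (x - t0)\<^sup>2 / 2) has_real_derivative x - t0) (at x)"
      by (auto intro!: derivative_eq_intros)
    then show "((\<lambda>x. ?c * ((x - t0)\<^sup>2 / 2)) has_real_derivative ?c * (x - t0)) (at x)"
      by (rule DERIV_cmult)
    show "(V has_real_derivative V' x) (at x)"
      using V'[of x] x assms by simp
    show "?c * (x - t0) \<le> V' x"
      using V'_lower[of t0 x] x assms by simp
  qed (use assms in \<open>auto intro!: continuous_intros continuous_on_subset[OF V_cont]\<close>)
  then show ?thesis
    using V_pos[of t0] assms by simp
qed

definition growth :: real where
  "growth = (1 / (2 * (real k + 1))) powr p / ((real k + 1) * (2 * p + 1))"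

lemma growth_pos: "growth > 0"
  unfolding growth_def using p by simp

lemma growth_mult_exp:
  "growth * exp (p * y) * (2 * p + 1) = (exp y / (real k + 1) / 2) powr p / (real k + 1)"
proof -
  have "(exp y / (real k + 1) / 2) powr p = exp (p * y) * (1 / (2 * (real k + 1))) powr p"
    using powr_mult[of "exp y" "1 / (2 * (real k + 1))" p] by (simp add: exp_powr_real mult.commute)
  then show ?thesis
    using p unfolding growth_def by (simp add: divide_simps mult_ac)
qed

lemma V_powr_lower:
  assumes "0 < t0" "t0 < t" "t < R"
  shows "(exp (U' t0) / (real k + 1) / 2) powr p * (t - t0) powr (2 * p) \<le> V t powr p"
proof -
  let ?c = "exp (U' t0) / (real k + 1)"
  have "(t - t0)\<^sup>2 = (t - t0) powr 2"
    using assms by (simp add: powr_realpow)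
  then have "((t - t0)\<^sup>2) powr p = (t - t0) powr (2 * p)"
    by (simp add: powr_powr)
  then have "(?c / 2) powr p * (t - t0) powr (2 * p) = (?c * ((t - t0)\<^sup>2 / 2)) powr p"
    using powr_mult[of "?c / 2" "(t - t0)\<^sup>2" p] by (simp add: mult_ac)
  also have "\<dots> \<le> V t powr p"
    using V_lower[of t0 t] assms p by (intro powr_mono2) auto
  finally show ?thesis .
qed

lemma U'_increment:
  assumes "0 < t0" "t0 \<le> t" "t < R"
  shows "U' t0 + growth * exp (p * U' t0) * (t - t0) powr (2 * p + 1) \<le> U' t"
proof -
  define K where "K = growth * exp (p * U' t0)"
  have "K * (t - t0) powr (2 * p + 1) - K * (t0 - t0) powr (2 * p + 1) \<le> U' t - U' t0"
  proof (rule diff_le_diff_of_derivative_le[where f' = "\<lambda>x. K * ((2 * p + 1) * (x - t0) powr (2 * p))"])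
    fix x assume x: "t0 < x" "x < t"
    show "((\<lambda>x. K * (x - t0) powr (2 * p + 1)) has_real_derivative
        K * ((2 * p + 1) * (x - t0) powr (2 * p))) (at x)"
      using x by (auto intro!: derivative_eq_intros)
    show "(U' has_real_derivative U'' x) (at x)"
      using U''[of x] x assms by simp
    have "K * ((2 * p + 1) * (x - t0) powr (2 * p))
        = growth * exp (p * U' t0) * (2 * p + 1) * (x - t0) powr (2 * p)"
      unfolding K_def by (simp only: mult_ac)
    also have "\<dots> = (exp (U' t0) / (real k + 1) / 2) powr p * (x - t0) powr (2 * p) / (real k + 1)"
      unfolding growth_mult_exp by simp
    also have "\<dots> \<le> V x powr p / (real k + 1)"
      using V_powr_lower[of t0 x] x assms by (simp add: divide_right_mono)
    also have "\<dots> \<le> U'' x"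
      using U''_lower[of x] x assms by simp
    finally show "K * ((2 * p + 1) * (x - t0) powr (2 * p)) \<le> U'' x" .
  qed (use assms p in \<open>auto intro!: continuous_intros continuous_on_powr'
        continuous_on_subset[OF U'_cont]\<close>)
  then show ?thesis
    using p by (simp add: K_def)
qed

definition q :: real where
  "q = p / (2 * p + 1)"

text \<open>\<open>step y\<close> is the length of an interval over which \<open>U'_increment\<close> guarantees that
  \<open>U'\<close> grows by 1 from the value \<open>y\<close>.\<close>

definition step :: "real \<Rightarrow> real" where
  "step y = (1 / growth) powr (1 / (2 * p + 1)) * exp (- q * y)"

lemma q_pos: "q > 0"
  unfolding q_def using p by simp

lemma step_pos: "step y > 0"
  unfolding step_def using growth_pos by simp

lemma growth_step: "growth * exp (p * y) * step y powr (2 * p + 1) = 1"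
proof -
  have "((1 / growth) powr (1 / (2 * p + 1))) powr (2 * p + 1) = 1 / growth"
    using p growth_pos by (simp add: powr_powr)
  moreover have "exp (- q * y) powr (2 * p + 1) = exp (- (p * y))"
    using p by (simp add: exp_powr_real q_def field_simps)
  ultimately have "step y powr (2 * p + 1) = exp (- (p * y)) / growth"
    by (simp add: step_def powr_mult)
  then show ?thesis
    using growth_pos by (simp add: exp_minus field_simps)
qed

lemma U'_step:
  assumes "0 < t" "t + step (U' t) < R"
  shows "U' t + 1 \<le> U' (t + step (U' t))"
  using U'_increment[of t "t + step (U' t)"] growth_step[of "U' t"] step_pos[of "U' t"] assms
  by simp

lemma step_add_nat: "step (y + real m) = step y * exp (- q) ^ m"
proof -
  have "exp (- q * (y + real m)) = exp (- q * y) * exp (real m * (- q))"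
    by (simp add: exp_add[symmetric] algebra_simps)
  moreover have "exp (real m * (- q)) = exp (- q) ^ m"
    by (rule exp_of_nat_mult)
  ultimately show ?thesis
    by (simp add: step_def)
qed

lemma step_antimono: "y \<le> z \<Longrightarrow> step z \<le> step y"
  unfolding step_def using q_pos growth_pos by (auto intro!: mult_left_mono)

lemma U'_iterated_steps:
  assumes t0: "0 < t0" and T: "t0 + step (U' t0) / (1 - exp (- q)) < R"
  shows "\<exists>t. t0 \<le> t \<and> t \<le> t0 + step (U' t0) * (1 - exp (- q) ^ m) / (1 - exp (- q)) \<and>
    U' t0 + real m \<le> U' t"
proof (induction m)
  case 0
  show ?case by (intro exI[of _ t0]) simp
next
  case (Suc m)
  define \<rho> where "\<rho> = exp (- q)"
  have \<rho>: "0 < \<rho>" "\<rho> < 1"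
    using q_pos by (auto simp: \<rho>_def)
  obtain t where t: "t0 \<le> t" "t \<le> t0 + step (U' t0) * (1 - \<rho> ^ m) / (1 - \<rho>)"
    "U' t0 + real m \<le> U' t"
    using Suc by (auto simp: \<rho>_def)
  have "step (U' t) \<le> step (U' t0) * \<rho> ^ m"
    using step_antimono[OF t(3)] step_add_nat by (simp add: \<rho>_def)
  moreover have "step (U' t0) * (1 - \<rho> ^ m) / (1 - \<rho>) + step (U' t0) * \<rho> ^ m
      = step (U' t0) * (1 - \<rho> ^ Suc m) / (1 - \<rho>)"
    using \<rho> by (simp add: field_simps)
  ultimately have t_next: "t + step (U' t) \<le> t0 + step (U' t0) * (1 - \<rho> ^ Suc m) / (1 - \<rho>)"
    using t(2) by linarith
  moreover have "step (U' t0) * (1 - \<rho> ^ Suc m) / (1 - \<rho>) \<le> step (U' t0) / (1 - \<rho>)"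
    using geometric_partial_sum_le \<rho> step_pos[of "U' t0"] less_imp_le by blast
  ultimately have "U' t + 1 \<le> U' (t + step (U' t))"
    using T t(1) t0 by (intro U'_step) (auto simp: \<rho>_def)
  then show ?case
    using t t_next step_pos[of "U' t"] by (intro exI[of _ "t + step (U' t)"]) (auto simp: \<rho>_def)
qed

text \<open>Otherwise the steps from \<open>t\<^sub>0\<close>, of geometrically decreasing lengths, all stay below
  some \<open>T < R\<close> while raising \<open>U'\<close> without bound, contradicting \<open>U' \<le> U' T\<close>.\<close>

lemma blow_up_rate:
  assumes t0: "0 < t0" "t0 < R"
  shows "R - t0 \<le> step (U' t0) / (1 - exp (- q))"
proof (rule ccontr)
  define T where "T = t0 + step (U' t0) / (1 - exp (- q))"
  assume "\<not> R - t0 \<le> step (U' t0) / (1 - exp (- q))"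
  then have T: "T < R"
    by (simp add: T_def)
  obtain m :: nat where m: "U' T - U' t0 < real m"
    using reals_Archimedean2 by blast
  obtain t where t: "t0 \<le> t" "t \<le> t0 + step (U' t0) * (1 - exp (- q) ^ m) / (1 - exp (- q))"
    "U' t0 + real m \<le> U' t"
    using U'_iterated_steps[OF t0(1)] T by (auto simp: T_def)
  moreover have "step (U' t0) * (1 - exp (- q) ^ m) / (1 - exp (- q)) \<le> step (U' t0) / (1 - exp (- q))"
    using geometric_partial_sum_le step_pos[of "U' t0"] q_pos less_imp_le by simp
  ultimately have "U' t \<le> U' T"
    using t0 T by (intro U'_mono) (auto simp: T_def)
  with t(3) m show False
    by linarith
qed

lemma U'_le_div_sqrt:
  obtains K where "K \<ge> 0" "\<And>t. 0 < t \<Longrightarrow> t < R \<Longrightarrow> U' t \<le> K / sqrt (R - t)"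
proof
  define C where "C = (1 / growth) powr (1 / (2 * p + 1)) / (1 - exp (- q))"
  have C: "C > 0"
    using q_pos growth_pos by (simp add: C_def)
  show "2 / q * sqrt C \<ge> 0"
    using q_pos C by simp
  fix t assume t: "0 < t" "t < R"
  have "R - t \<le> C * exp (- (q * U' t))"
    using blow_up_rate[OF t] by (simp add: C_def step_def)
  then have "exp (q * U' t) \<le> C / (R - t)"
    using t by (simp add: pos_le_divide_eq exp_minus field_simps)
  then have "U' t \<le> 2 / q * sqrt (C / (R - t))"
    using q_pos U'_pos[OF t] t by (intro le_sqrt_of_exp_le) auto
  then show "U' t \<le> 2 / q * sqrt C / sqrt (R - t)"
    by (simp add: real_sqrt_divide)
qed

lemma U_bounded:
  obtains M where "\<And>t. 0 \<le> t \<Longrightarrow> t < R \<Longrightarrow> \<bar>U t\<bar> \<le> M"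
proof -
  obtain K where K: "K \<ge> 0" "\<And>t. 0 < t \<Longrightarrow> t < R \<Longrightarrow> U' t \<le> K / sqrt (R - t)"
    using U'_le_div_sqrt by blast
  have "\<bar>U t\<bar> \<le> \<bar>U 0\<bar> + 2 * K * sqrt R" if t: "0 \<le> t" "t < R" for t
  proof -
    have "U t - U 0 \<le> - 2 * K * sqrt (R - t) - - 2 * K * sqrt (R - 0)"
    proof (rule diff_le_diff_of_derivative_le[where g' = "\<lambda>s. K / sqrt (R - s)"])
      fix s assume s: "0 < s" "s < t"
      show "(U has_real_derivative U' s) (at s)"
        using U'[of s] s t by simp
      show "((\<lambda>s. - 2 * K * sqrt (R - s)) has_real_derivative K / sqrt (R - s)) (at s)"
        using s t by (auto intro!: derivative_eq_intros simp: field_simps)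
      show "U' s \<le> K / sqrt (R - s)"
        using K(2)[of s] s t by simp
    qed (use t in \<open>auto intro!: continuous_intros continuous_on_subset[OF U_cont]\<close>)
    then have "U t \<le> U 0 + 2 * K * sqrt R - 2 * K * sqrt (R - t)"
      by simp
    moreover have "U 0 \<le> U t"
    proof (rule DERIV_nonneg_imp_increasing_open[OF t(1)])
      fix x assume "0 < x" "x < t"
      with t show "\<exists>y. (U has_real_derivative y) (at x) \<and> 0 \<le> y"
        using U'[of x] U'_pos[of x] by (intro exI[of _ "U' x"]) auto
    qed (use t in \<open>auto intro: continuous_on_subset[OF U_cont]\<close>)
    moreover have "0 \<le> 2 * K * sqrt (R - t)"
      using K(1) t by simp
    ultimately show ?thesis
      using abs_ge_self[of "U 0"] abs_ge_minus_self[of "U 0"] unfolding abs_le_iff by linarith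
  qed
  then show thesis
    by (rule that)
qed

lemma V_bounded_or_tendsto:
  "(\<exists>M. \<forall>t. 0 \<le> t \<longrightarrow> t < R \<longrightarrow> \<bar>V t\<bar> \<le> M) \<or>
   (\<forall>M. \<exists>\<delta>>0. \<forall>t. R - \<delta> < t \<longrightarrow> t < R \<longrightarrow> M < V t)"
proof -
  have "\<forall>M. \<exists>\<delta>>0. \<forall>t. R - \<delta> < t \<longrightarrow> t < R \<longrightarrow> M < V t"
    if unbounded: "\<not> (\<exists>M. \<forall>t. 0 \<le> t \<longrightarrow> t < R \<longrightarrow> \<bar>V t\<bar> \<le> M)"
  proof
    fix M
    obtain t0 where t0: "0 \<le> t0" "t0 < R" "\<not> \<bar>V t0\<bar> \<le> M"
      using unbounded by blast
    then have "M < V t0"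
      using V_pos[of t0] by simp
    then have "M < V t" if "t0 < t" "t < R" for t
      using V_mono[of t0 t] t0 that by simp
    then show "\<exists>\<delta>>0. \<forall>t. R - \<delta> < t \<longrightarrow> t < R \<longrightarrow> M < V t"
      using t0 by (intro exI[of _ "R - t0"]) auto
  qed
  then show ?thesis
    by blast
qed

end

lemma bounded_image_ball_radial:
  fixes f :: "'a::real_normed_vector \<Rightarrow> real"
  assumes "\<And>x. x \<in> ball 0 R \<Longrightarrow> f x = \<phi> (norm x)" "\<And>t. 0 \<le> t \<Longrightarrow> t < R \<Longrightarrow> \<bar>\<phi> t\<bar> \<le> M"
  shows "bounded (f ` ball 0 R)"
  unfolding bounded_iff using assms by (intro exI[of _ M]) auto

lemma radial_system_of_radial_solution:
  fixes u v :: "real^'n \<Rightarrow> real" and R p :: real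
  assumes "CARD('n) \<ge> 2" and "p > 0"
    and "C2_on (ball 0 R) u" and "C2_on (ball 0 R) v"
    and "radial_on (ball 0 R) u" and "radial_on (ball 0 R) v"
    and v_pos: "\<forall>x\<in>ball 0 R. v x > 0"
    and u_eq: "\<forall>x\<in>ball 0 R. laplacian u x = v x powr p"
    and v_eq: "\<forall>x\<in>ball 0 R. laplacian v x = exp (norm (grad u x))"
  obtains U U' U'' V V' V'' where "radial_system U U' U'' V V' V'' R p (CARD('n) - 1)"
    and "\<And>x. x \<in> ball 0 R \<Longrightarrow> u x = U (norm x)" and "\<And>x. x \<in> ball 0 R \<Longrightarrow> v x = V (norm x)"
proof -
  fix i :: 'n
  obtain Du D2u where "radial_C2 u R Du D2u"
    using assms(3,5) unfolding C2_on_def radial_C2_def by blast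
  then interpret u: radial_C2 u R Du D2u i .
  obtain Dv D2v where "radial_C2 v R Dv D2v"
    using assms(4,6) unfolding C2_on_def radial_C2_def by blast
  then interpret v: radial_C2 v R Dv D2v i .
  have k: "real (CARD('n) - 1) = real CARD('n) - 1"
    using assms(1) by (simp add: of_nat_diff)
  have "radial_system u.profile u.profile' u.profile'' v.profile v.profile' v.profile'' R p
      (CARD('n) - 1)"
  proof
    fix t :: real
    show "\<bar>t\<bar> < R \<Longrightarrow> (u.profile has_real_derivative u.profile' t) (at t)"
      "\<bar>t\<bar> < R \<Longrightarrow> (u.profile' has_real_derivative u.profile'' t) (at t)"
      "\<bar>t\<bar> < R \<Longrightarrow> (v.profile has_real_derivative v.profile' t) (at t)"
      "\<bar>t\<bar> < R \<Longrightarrow> (v.profile' has_real_derivative v.profile'' t) (at t)"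
      by (fact u.has_real_derivative_profile u.has_real_derivative_profile'
          v.has_real_derivative_profile v.has_real_derivative_profile')+
    show "0 \<le> t \<Longrightarrow> t < R \<Longrightarrow> v.profile t > 0"
      using v_pos v.axis_in_ball[of t] by (simp add: v.profile_def)
    assume t: "0 < t" "t < R"
    then have "t *\<^sub>R axis i (1::real) \<in> ball 0 R"
      using u.axis_in_ball[of t] by simp
    then show "u.profile'' t + real (CARD('n) - 1) * u.profile' t / t = v.profile t powr p"
      and "v.profile'' t + real (CARD('n) - 1) * v.profile' t / t = exp \<bar>u.profile' t\<bar>"
      using u_eq v_eq u.laplacian_on_axis[OF t] v.laplacian_on_axis[OF t] u.norm_grad_on_axis[OF t]
      by (simp_all add: k v.profile_def)
  qed (use assms in auto)
  then show thesis
    using that u.eq_profile v.eq_profile by blast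
qed

theorem corollary2p2:
  fixes u v :: "real^'n \<Rightarrow> real" and R p :: real
  assumes "CARD('n) \<ge> 2" and "R > 0" and "p > 0"
    and "C2_on (ball 0 R) u" and "C2_on (ball 0 R) v"
    and "radial_on (ball 0 R) u" and "radial_on (ball 0 R) v"
    and "\<forall>x\<in>ball 0 R. u x > 0" and "\<forall>x\<in>ball 0 R. v x > 0"
    and "\<forall>x\<in>ball 0 R. laplacian u x = v x powr p"
    and "\<forall>x\<in>ball 0 R. laplacian v x = exp (norm (grad u x))"
  shows "(bounded (u ` ball 0 R) \<and> bounded (v ` ball 0 R)) \<or>
         (bounded (u ` ball 0 R) \<and>
          (\<forall>M. \<exists>\<delta>>0. \<forall>x\<in>ball 0 R. norm x > R - \<delta> \<longrightarrow> v x > M))"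
proof -
  obtain U U' U'' V V' V'' where sys: "radial_system U U' U'' V V' V'' R p (CARD('n) - 1)"
    and u_profile: "\<And>x. x \<in> ball 0 R \<Longrightarrow> u x = U (norm x)"
    and v_profile: "\<And>x. x \<in> ball 0 R \<Longrightarrow> v x = V (norm x)"
    using radial_system_of_radial_solution[OF assms(1,3-7,9-11)] by blast
  interpret radial_system U U' U'' V V' V'' R p "CARD('n) - 1"
    by (fact sys)
  obtain M where "\<And>t. 0 \<le> t \<Longrightarrow> t < R \<Longrightarrow> \<bar>U t\<bar> \<le> M"
    using U_bounded by blast
  with u_profile have u_bounded: "bounded (u ` ball 0 R)"
    by (rule bounded_image_ball_radial)
  from V_bounded_or_tendsto show ?thesis
  proof
    assume "\<exists>M. \<forall>t. 0 \<le> t \<longrightarrow> t < R \<longrightarrow> \<bar>V t\<bar> \<le> M"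
    then have "bounded (v ` ball 0 R)"
      using v_profile bounded_image_ball_radial by metis
    with u_bounded show ?thesis
      by blast
  next
    assume V_large: "\<forall>M. \<exists>\<delta>>0. \<forall>t. R - \<delta> < t \<longrightarrow> t < R \<longrightarrow> M < V t"
    have "\<exists>\<delta>>0. \<forall>x\<in>ball 0 R. norm x > R - \<delta> \<longrightarrow> v x > M" for M
      using V_large[rule_format, of M] v_profile by auto
    with u_bounded show ?thesis
      by blast
  qed
qed

end
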